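(* Let $\mathcal{N}=\mathcal{N}_1\cup\mathcal{N}_2$ be a partition of a finite set of nodes (computing-bottleneck nodes $\mathcal{N}_1$, communication-bottleneck nodes $\mathcal{N}_2$), $B>0$, $\gamma\in(0,1]$, and $T_o$ a constant. For each $i$ let $a_i=q_ib_i+s_i$ and $P_i=k_ib_i+m_i$ be affine in the (real-valued) local batch size $b_i$, with $q_i+k_i>0$ for $i\in\mathcal{N}_1$ and $q_i+\gamma k_i>0$ for $i\in\mathcal{N}_2$. Consider the problem $$\min\ \mu\quad\text{s.t.}\quad a_i+P_i\le\mu\ (i\in\mathcal{N}_1),\quad a_i+\gamma P_i+T_o\le\mu\ (i\in\mathcal{N}_2),\quad \sum_{i\in\mathcal{N}}b_i=B.$$ Then at an optimal solution $\mu^*$, $a_i+P_i=\mu^*$ for all $i\in\mathcal{N}_1$ and $a_i+\gamma P_i+T_o=\mu^*$ for all $i\in\mathcal{N}_2$; i.e. all computing-bottleneck nodes have the same computing time $t_{compute}=a_i+P_i$, all communication-bottleneck nodes have the same first-bucket synchronization start $\mathit{syncStart}=a_i+\gamma P_i$, and $t_{compute}=\mathit{syncStart}+T_o$.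
   Context: Synchronous data-parallel training model: $a_i$ is the time for parameter update, data loading and forward propagation, $P_i$ the backpropagation time, $\gamma$ the overlap ratio, $T_o$ the synchronization time of all gradient buckets except the last, and $T_u$ that of the last bucket; the batch processing time is $\mu+T_u$, so minimizing $\mu$ minimizes batch processing time. *)

theory Defs
  imports Complex_Main
begin

definition feasible ::
  "'a set \<Rightarrow> 'a set \<Rightarrow> real \<Rightarrow> real \<Rightarrow> real \<Rightarrow>
   ('a \<Rightarrow> real) \<Rightarrow> ('a \<Rightarrow> real) \<Rightarrow> ('a \<Rightarrow> real) \<Rightarrow> ('a \<Rightarrow> real) \<Rightarrow>
   ('a \<Rightarrow> real) \<Rightarrow> real \<Rightarrow> bool" where
  "feasible N1 N2 B \<gamma> T\<^sub>o q s k m b \<mu> \<longleftrightarrow>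
     (\<forall>i\<in>N1. (q i * b i + s i) + (k i * b i + m i) \<le> \<mu>) \<and>
     (\<forall>i\<in>N2. (q i * b i + s i) + \<gamma> * (k i * b i + m i) + T\<^sub>o \<le> \<mu>) \<and>
     (\<Sum>i\<in>N1 \<union> N2. b i) = B"

definition optimal ::
  "'a set \<Rightarrow> 'a set \<Rightarrow> real \<Rightarrow> real \<Rightarrow> real \<Rightarrow>
   ('a \<Rightarrow> real) \<Rightarrow> ('a \<Rightarrow> real) \<Rightarrow> ('a \<Rightarrow> real) \<Rightarrow> ('a \<Rightarrow> real) \<Rightarrow>
   ('a \<Rightarrow> real) \<Rightarrow> real \<Rightarrow> bool" where
  "optimal N1 N2 B \<gamma> T\<^sub>o q s k m b \<mu> \<longleftrightarrow>
     feasible N1 N2 B \<gamma> T\<^sub>o q s k m b \<mu> \<and>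
     (\<forall>b' \<mu>'. feasible N1 N2 B \<gamma> T\<^sub>o q s k m b' \<mu>' \<longrightarrow> \<mu> \<le> \<mu>')"

end

theory Submission
  imports Defs
begin

text \<open>On every node the finishing time is an affine function of the local batch size with
  positive slope. If one node finished strictly before the makespan \<mu>, moving a little
  batch to it from every other node would keep the total batch and make every node finish
  strictly before \<mu>, contradicting optimality.\<close>

lemma sum_transfer_to_one:
  fixes b :: "'a \<Rightarrow> real"
  assumes "finite N" and "j \<in> N"
  shows "(\<Sum>i\<in>N. if i = j then b j + (real (card N) - 1) * e else b i - e) = sum b N"
proof -
  have "card N \<ge> 1"
    using assms by (auto simp: Suc_le_eq card_gt_0_iff)
  then have "(\<Sum>i\<in>N - {j}. if i = j then b j + (real (card N) - 1) * e else b i - e)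
      = sum b (N - {j}) - (real (card N) - 1) * e"
    using assms by (simp add: sum_subtractf card_Diff_singleton of_nat_diff)
  then show ?thesis
    using assms by (simp add: sum.remove)
qed

lemma affine_makespan_improvable:
  fixes c d b :: "'a \<Rightarrow> real"
  assumes "finite N" and "\<forall>i\<in>N. c i > 0"
    and "\<forall>i\<in>N. c i * b i + d i \<le> \<mu>"
    and "j \<in> N" and "c j * b j + d j < \<mu>"
  obtains b' where "sum b' N = sum b N" and "\<forall>i\<in>N. c i * b' i + d i < \<mu>"
proof
  define n where "n = real (card N)"
  have "n \<ge> 1"
    using assms(1,4) by (auto simp: n_def Suc_le_eq card_gt_0_iff)
  \<comment> \<open>Node \<open>j\<close> receives \<open>(n - 1) e\<close>, which uses less than half of its slack.\<close>
  define e where "e = (\<mu> - (c j * b j + d j)) / (2 * c j * n)"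
  have "c j > 0" and "e > 0"
    using assms(2,4,5) \<open>n \<ge> 1\<close> by (auto simp: e_def)
  define b' where "b' i = (if i = j then b j + (n - 1) * e else b i - e)" for i
  show "sum b' N = sum b N"
    unfolding b'_def n_def by (rule sum_transfer_to_one[OF assms(1,4)])
  show "\<forall>i\<in>N. c i * b' i + d i < \<mu>"
  proof
    fix i assume "i \<in> N"
    show "c i * b' i + d i < \<mu>"
    proof (cases "i = j")
      case True
      have "c j * ((n - 1) * e) \<le> c j * (n * e)"
        using \<open>c j > 0\<close> \<open>e > 0\<close> by (intro mult_left_mono) auto
      also have "\<dots> = (\<mu> - (c j * b j + d j)) / 2"
        using \<open>c j > 0\<close> \<open>n \<ge> 1\<close> by (simp add: e_def field_simps)
      finally show ?thesis
        using True assms(5) by (simp add: b'_def algebra_simps)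
    next
      case False
      have "c i * e > 0"
        using assms(2) \<open>i \<in> N\<close> \<open>e > 0\<close> by simp
      then show ?thesis
        using False assms(3) \<open>i \<in> N\<close> by (force simp: b'_def algebra_simps)
    qed
  qed
qed

lemma affine_makespan_optimum_balanced:
  fixes c d b :: "'a \<Rightarrow> real"
  assumes "finite N" and "\<forall>i\<in>N. c i > 0"
    and "\<forall>i\<in>N. c i * b i + d i \<le> \<mu>"
    and minimal: "\<And>b' \<mu>'. \<forall>i\<in>N. c i * b' i + d i \<le> \<mu>' \<Longrightarrow> sum b' N = sum b N \<Longrightarrow> \<mu> \<le> \<mu>'"
  shows "\<forall>i\<in>N. c i * b i + d i = \<mu>"
proof (rule ccontr)
  assume "\<not> ?thesis"
  then obtain j where "j \<in> N" and "c j * b j + d j < \<mu>"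
    using assms(3) by force
  then obtain b' where sum_b': "sum b' N = sum b N" and below: "\<forall>i\<in>N. c i * b' i + d i < \<mu>"
    using affine_makespan_improvable assms(1-3) by metis
  define \<mu>' where "\<mu>' = Max ((\<lambda>i. c i * b' i + d i) ` N)"
  have "\<mu>' < \<mu>"
    unfolding \<mu>'_def using assms(1) \<open>j \<in> N\<close> below by (subst Max_less_iff) auto
  moreover have "\<forall>i\<in>N. c i * b' i + d i \<le> \<mu>'"
    using assms(1) by (simp add: \<mu>'_def)
  ultimately show False
    using minimal[OF _ sum_b'] by fastforce
qed

theorem mainTheorem7:
  fixes N1 N2 :: "'a set" and B \<gamma> T\<^sub>o :: real
    and q s k m b :: "'a \<Rightarrow> real" and \<mu> :: real
  assumes "finite N1" and "finite N2" and "N1 \<inter> N2 = {}"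
    and "B > 0" and "0 < \<gamma>" and "\<gamma> \<le> 1"
    and "\<forall>i\<in>N1. q i + k i > 0"
    and "\<forall>i\<in>N2. q i + \<gamma> * k i > 0"
    and "optimal N1 N2 B \<gamma> T\<^sub>o q s k m b \<mu>"
  shows "(\<forall>i\<in>N1. (q i * b i + s i) + (k i * b i + m i) = \<mu>) \<and>
         (\<forall>i\<in>N2. (q i * b i + s i) + \<gamma> * (k i * b i + m i) + T\<^sub>o = \<mu>)"
proof -
  define c where "c i = (if i \<in> N1 then q i + k i else q i + \<gamma> * k i)" for i
  define d where "d i = (if i \<in> N1 then s i + m i else s i + \<gamma> * m i + T\<^sub>o)" for i
  have time_N1: "(q i * x + s i) + (k i * x + m i) = c i * x + d i" if "i \<in> N1" for i x
    using that by (simp add: c_def d_def algebra_simps)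
  have time_N2: "(q i * x + s i) + \<gamma> * (k i * x + m i) + T\<^sub>o = c i * x + d i" if "i \<in> N2" for i x
    using that assms(3) by (auto simp: c_def d_def algebra_simps)
  have feasible_iff: "feasible N1 N2 B \<gamma> T\<^sub>o q s k m b' \<mu>' \<longleftrightarrow>
      (\<forall>i\<in>N1 \<union> N2. c i * b' i + d i \<le> \<mu>') \<and> sum b' (N1 \<union> N2) = B" for b' \<mu>'
    by (auto simp: feasible_def time_N1 time_N2)
  have "\<forall>i\<in>N1 \<union> N2. c i * b i + d i = \<mu>"
  proof (rule affine_makespan_optimum_balanced)
    show "\<forall>i\<in>N1 \<union> N2. c i > 0"
      using assms(7,8) by (auto simp: c_def)
  qed (use assms(1,2,9) in \<open>auto simp: optimal_def feasible_iff\<close>)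
  then show ?thesis
    by (simp add: time_N1 time_N2)
qed

end
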